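(* Let $(\mathbb S,+,\cdot)$ be an S-Field, let $s,t\in\mathbb S$ and $m\in\mathbb S_0$ with $m\neq 0$. Then $\frac{s}{m}+\frac{t}{m}=\frac{s+t}{m}$.
   Context: An S-Structure is a triple $(\mathbb S,+,\cdot)$ where $\mathbb S$ is a set and $+,\cdot$ are binary operations on $\mathbb S$ such that: $(\mathbb S,+)$ is a commutative group with identity $0$ (the inverse of $s$ is written $-s$, and $s-t:=s+(-t)$); $\mathbb S$ is closed under $\cdot$; and there exists $s\in\mathbb S$ with $0\cdot s\neq 0$ or $s\cdot 0\neq 0$. Multiplication binds tighter than addition. The structures considered come with a distinguished element of $\mathbb S$ denoted $1$. It is Commutative if $s\cdot t=t\cdot s$ for all $s,t$. For a Commutative S-Structure and $\alpha\in\mathbb S$, put $\mathbb S_\alpha=\{s\in\mathbb S:0\cdot s=s\cdot 0=\alpha\}$ and $\Lambda=\{\alpha\in\mathbb S:\mathbb S_\alpha\neq\emptyset\}$. Wheel Distributive: $s\cdot(t+r)+(s\cdot 0)=(s\cdot t)+(s\cdot r)$ for all $s,t,r\in\mathbb S$. S-Associative: for all $m,n\in\mathbb S_0$ and $s\in\mathbb S$, $m\cdot(n\cdot s)=(m\cdot n)\cdot s-([(m-1)\cdot(n-1)]\cdot(0\cdot s))$. Base: if $\mathbb S_0\neq\emptyset$ and $\alpha\in\Lambda$, $q\in\mathbb S_\alpha$ is a Base for $\mathbb S_\alpha$ if $q+\beta\in\mathbb S_\alpha$ for all $\beta\in\mathbb S_0$ and every $s\in\mathbb S_\alpha$ equals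 $q+\beta$ for some $\beta\in\mathbb S_0$. Coordinated: $\mathbb S_0\neq\emptyset$ and every $\mathbb S_\alpha$ with $\alpha\in\Lambda$ has a Base. Standard Bases: a Coordinated Commutative S-Structure has Standard Bases if there is a specified element $q_0(1)\in\mathbb S_1$ which is a Base for $\mathbb S_1$, and for every $\alpha\in\Lambda$ the element $q_0(\alpha):=\alpha\cdot(q_0(1)+1)-1$ lies in $\mathbb S_\alpha$ and is a Base for $\mathbb S_\alpha$. An Essential S-Structure is an S-Structure that is Commutative, Wheel Distributive, S-Associative, has Standard Bases (in particular is Coordinated), satisfies $0,1\in\mathbb S_0$, and satisfies $\mathbb S_0=\{1\cdot x:x\in\mathbb S_0\}$. A Unity is an element $e\in\Lambda$ with $e\cdot s=s\cdot e=s$ for all $s\in\mathbb S$. Scalar Inverses: the structure has a Unity $e$ and for every $x\in\mathbb S_0$ with $x\neq 0$ there is $x^{-1}\in\mathbb S_0$ with $x\cdot x^{-1}=x^{-1}\cdot x=e$. An S-Ring is an Essential S-Structure with a Unity; an S-Field is an S-Ring with Scalar Inverses. Division By Scalars: for $s\in\mathbb S$ and $m\in\mathbb S_0$, $\frac{s}{m}$ denotes an element $q\in\mathbb S$ such that $s=m\cdot q=q\cdot m$. *)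

theory Defs
  imports Main
begin

definition S_structure :: "'a set \<Rightarrow> ('a \<Rightarrow> 'a \<Rightarrow> 'a) \<Rightarrow> ('a \<Rightarrow> 'a \<Rightarrow> 'a) \<Rightarrow> 'a \<Rightarrow> ('a \<Rightarrow> 'a) \<Rightarrow> 'a \<Rightarrow> bool" where
  "S_structure S add mul zero neg one \<longleftrightarrow>
     (\<forall>s\<in>S. \<forall>t\<in>S. add s t \<in> S) \<and>
     (\<forall>s\<in>S. \<forall>t\<in>S. \<forall>r\<in>S. add (add s t) r = add s (add t r)) \<and>
     (\<forall>s\<in>S. \<forall>t\<in>S. add s t = add t s) \<and>
     zero \<in> S \<and> (\<forall>s\<in>S. add zero s = s \<and> add s zero = s) \<and>
     (\<forall>s\<in>S. neg s \<in> S \<and> add s (neg s) = zero \<and> add (neg s) s = zero) \<and>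
     (\<forall>s\<in>S. \<forall>t\<in>S. mul s t \<in> S) \<and>
     (\<exists>s\<in>S. mul zero s \<noteq> zero \<or> mul s zero \<noteq> zero) \<and>
     one \<in> S"

definition ssub :: "('a \<Rightarrow> 'a \<Rightarrow> 'a) \<Rightarrow> ('a \<Rightarrow> 'a) \<Rightarrow> 'a \<Rightarrow> 'a \<Rightarrow> 'a" where
  "ssub add neg s t = add s (neg t)"

definition S_commutative :: "'a set \<Rightarrow> ('a \<Rightarrow> 'a \<Rightarrow> 'a) \<Rightarrow> bool" where
  "S_commutative S mul \<longleftrightarrow> (\<forall>s\<in>S. \<forall>t\<in>S. mul s t = mul t s)"

definition S_sub :: "'a set \<Rightarrow> ('a \<Rightarrow> 'a \<Rightarrow> 'a) \<Rightarrow> 'a \<Rightarrow> 'a \<Rightarrow> 'a set" where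
  "S_sub S mul zero \<alpha> = {s\<in>S. mul zero s = \<alpha> \<and> mul s zero = \<alpha>}"

definition S_Lambda :: "'a set \<Rightarrow> ('a \<Rightarrow> 'a \<Rightarrow> 'a) \<Rightarrow> 'a \<Rightarrow> 'a set" where
  "S_Lambda S mul zero = {\<alpha>\<in>S. S_sub S mul zero \<alpha> \<noteq> {}}"

definition wheel_distributive :: "'a set \<Rightarrow> ('a \<Rightarrow> 'a \<Rightarrow> 'a) \<Rightarrow> ('a \<Rightarrow> 'a \<Rightarrow> 'a) \<Rightarrow> 'a \<Rightarrow> bool" where
  "wheel_distributive S add mul zero \<longleftrightarrow>
     (\<forall>s\<in>S. \<forall>t\<in>S. \<forall>r\<in>S. add (mul s (add t r)) (mul s zero) = add (mul s t) (mul s r))"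

definition S_associative :: "'a set \<Rightarrow> ('a \<Rightarrow> 'a \<Rightarrow> 'a) \<Rightarrow> ('a \<Rightarrow> 'a \<Rightarrow> 'a) \<Rightarrow> 'a \<Rightarrow> ('a \<Rightarrow> 'a) \<Rightarrow> 'a \<Rightarrow> bool" where
  "S_associative S add mul zero neg one \<longleftrightarrow>
     (\<forall>m\<in>S_sub S mul zero zero. \<forall>n\<in>S_sub S mul zero zero. \<forall>s\<in>S.
        mul m (mul n s) = ssub add neg (mul (mul m n) s)
          (mul (mul (ssub add neg m one) (ssub add neg n one)) (mul zero s)))"

definition is_base :: "'a set \<Rightarrow> ('a \<Rightarrow> 'a \<Rightarrow> 'a) \<Rightarrow> ('a \<Rightarrow> 'a \<Rightarrow> 'a) \<Rightarrow> 'a \<Rightarrow> 'a \<Rightarrow> 'a \<Rightarrow> bool" where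
  "is_base S add mul zero \<alpha> q \<longleftrightarrow>
     q \<in> S_sub S mul zero \<alpha> \<and>
     (\<forall>\<beta>\<in>S_sub S mul zero zero. add q \<beta> \<in> S_sub S mul zero \<alpha>) \<and>
     (\<forall>s\<in>S_sub S mul zero \<alpha>. \<exists>\<beta>\<in>S_sub S mul zero zero. s = add q \<beta>)"

definition coordinated :: "'a set \<Rightarrow> ('a \<Rightarrow> 'a \<Rightarrow> 'a) \<Rightarrow> ('a \<Rightarrow> 'a \<Rightarrow> 'a) \<Rightarrow> 'a \<Rightarrow> bool" where
  "coordinated S add mul zero \<longleftrightarrow>
     S_sub S mul zero zero \<noteq> {} \<and>
     (\<forall>\<alpha>\<in>S_Lambda S mul zero. \<exists>q. is_base S add mul zero \<alpha> q)"

definition standard_bases :: "'a set \<Rightarrow> ('a \<Rightarrow> 'a \<Rightarrow> 'a) \<Rightarrow> ('a \<Rightarrow> 'a \<Rightarrow> 'a) \<Rightarrow> 'a \<Rightarrow> ('a \<Rightarrow> 'a) \<Rightarrow> 'a \<Rightarrow> bool" where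
  "standard_bases S add mul zero neg one \<longleftrightarrow>
     coordinated S add mul zero \<and> S_commutative S mul \<and>
     (\<exists>q01. q01 \<in> S_sub S mul zero one \<and> is_base S add mul zero one q01 \<and>
        (\<forall>\<alpha>\<in>S_Lambda S mul zero.
           let q = ssub add neg (mul \<alpha> (add q01 one)) one
           in q \<in> S_sub S mul zero \<alpha> \<and> is_base S add mul zero \<alpha> q))"

definition essential :: "'a set \<Rightarrow> ('a \<Rightarrow> 'a \<Rightarrow> 'a) \<Rightarrow> ('a \<Rightarrow> 'a \<Rightarrow> 'a) \<Rightarrow> 'a \<Rightarrow> ('a \<Rightarrow> 'a) \<Rightarrow> 'a \<Rightarrow> bool" where
  "essential S add mul zero neg one \<longleftrightarrow>
     S_structure S add mul zero neg one \<and>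
     S_commutative S mul \<and>
     wheel_distributive S add mul zero \<and>
     S_associative S add mul zero neg one \<and>
     standard_bases S add mul zero neg one \<and>
     coordinated S add mul zero \<and>
     zero \<in> S_sub S mul zero zero \<and> one \<in> S_sub S mul zero zero \<and>
     S_sub S mul zero zero = {mul one x | x. x \<in> S_sub S mul zero zero}"

definition is_unity :: "'a set \<Rightarrow> ('a \<Rightarrow> 'a \<Rightarrow> 'a) \<Rightarrow> 'a \<Rightarrow> 'a \<Rightarrow> bool" where
  "is_unity S mul zero e \<longleftrightarrow>
     e \<in> S_Lambda S mul zero \<and> (\<forall>s\<in>S. mul e s = s \<and> mul s e = s)"

definition S_ring :: "'a set \<Rightarrow> ('a \<Rightarrow> 'a \<Rightarrow> 'a) \<Rightarrow> ('a \<Rightarrow> 'a \<Rightarrow> 'a) \<Rightarrow> 'a \<Rightarrow> ('a \<Rightarrow> 'a) \<Rightarrow> 'a \<Rightarrow> bool" where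
  "S_ring S add mul zero neg one \<longleftrightarrow>
     essential S add mul zero neg one \<and> (\<exists>e. is_unity S mul zero e)"

definition S_field :: "'a set \<Rightarrow> ('a \<Rightarrow> 'a \<Rightarrow> 'a) \<Rightarrow> ('a \<Rightarrow> 'a \<Rightarrow> 'a) \<Rightarrow> 'a \<Rightarrow> ('a \<Rightarrow> 'a) \<Rightarrow> 'a \<Rightarrow> bool" where
  "S_field S add mul zero neg one \<longleftrightarrow>
     S_ring S add mul zero neg one \<and>
     (\<exists>e. is_unity S mul zero e \<and>
        (\<forall>x\<in>S_sub S mul zero zero. x \<noteq> zero \<longrightarrow>
           (\<exists>y\<in>S_sub S mul zero zero. mul x y = e \<and> mul y x = e)))"

text \<open>Division by scalars: q is a value of s/m.\<close>
definition is_quotient :: "'a set \<Rightarrow> ('a \<Rightarrow> 'a \<Rightarrow> 'a) \<Rightarrow> 'a \<Rightarrow> 'a \<Rightarrow> 'a \<Rightarrow> bool" where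
  "is_quotient S mul s m q \<longleftrightarrow> q \<in> S \<and> s = mul m q \<and> s = mul q m"

end

theory Submission
  imports Defs
begin

text \<open>For a scalar m we have m \<cdot> 0 = 0, so the correction term in Wheel Distributivity
  vanishes and m distributes over addition; commutativity then gives the right-hand
  quotient equation.\<close>

lemma wheel_distributive_scalar:
  assumes "S_structure S add mul zero neg one" and "wheel_distributive S add mul zero"
    and "m \<in> S" and "mul m zero = zero" and "a \<in> S" and "b \<in> S"
  shows "mul m (add a b) = add (mul m a) (mul m b)"
proof -
  have "add (mul m (add a b)) (mul m zero) = add (mul m a) (mul m b)"
    using assms(2,3,5,6) unfolding wheel_distributive_def by blast
  moreover have "mul m (add a b) \<in> S"
    using assms(1,3,5,6) unfolding S_structure_def by blast
  ultimately show ?thesis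
    using assms(1,4) unfolding S_structure_def by auto
qed

lemma is_quotient_add:
  assumes "S_structure S add mul zero neg one" and "S_commutative S mul"
    and "wheel_distributive S add mul zero"
    and "m \<in> S_sub S mul zero zero"
    and "is_quotient S mul s m q1" and "is_quotient S mul t m q2"
  shows "is_quotient S mul (add s t) m (add q1 q2)"
proof -
  have m: "m \<in> S" "mul m zero = zero"
    using assms(4) unfolding S_sub_def by auto
  have q: "q1 \<in> S" "s = mul m q1" "q2 \<in> S" "t = mul m q2"
    using assms(5,6) unfolding is_quotient_def by auto
  have sum_in: "add q1 q2 \<in> S"
    using assms(1) q unfolding S_structure_def by blast
  have left: "mul m (add q1 q2) = add s t"
    using wheel_distributive_scalar[OF assms(1,3) m q(1,3)] q by simp
  have "mul (add q1 q2) m = mul m (add q1 q2)"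
    using assms(2) m(1) sum_in unfolding S_commutative_def by blast
  with left sum_in show ?thesis
    unfolding is_quotient_def by simp
qed

theorem proposition4p1p4:
  fixes S :: "'a set" and add mul :: "'a \<Rightarrow> 'a \<Rightarrow> 'a" and zero one :: 'a and neg :: "'a \<Rightarrow> 'a"
  assumes "S_field S add mul zero neg one"
    and "s \<in> S" and "t \<in> S"
    and "m \<in> S_sub S mul zero zero" and "m \<noteq> zero"
  shows "\<forall>q1 q2. is_quotient S mul s m q1 \<longrightarrow> is_quotient S mul t m q2 \<longrightarrow>
           is_quotient S mul (add s t) m (add q1 q2)"
proof -
  have "essential S add mul zero neg one"
    using assms(1) unfolding S_field_def S_ring_def by blast
  then have "S_structure S add mul zero neg one" "S_commutative S mul"
    "wheel_distributive S add mul zero"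
    unfolding essential_def by auto
  with assms(4) show ?thesis
    by (blast intro: is_quotient_add)
qed

end
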